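(* Let $n\geq 2$, $\lambda>n$, $0<\mu<1$, and $h(x,y)=(\lambda x,\mu y)$. Let $f:\mathbb{R}^2\to\mathbb{R}^2$ be an orientation preserving homeomorphism with bounded displacement (there is $K>0$ with $|f(p)-p|\leq K$ for all $p$) such that $hfh^{-1}=f^n$. Then $f=\mathrm{id}$. *)

theory Defs
  imports "HOL-Analysis.Analysis"
begin

text \<open>We identify the plane R^2 with the complex numbers (x,y) = Complex x y.\<close>

definition circle_loop :: "complex \<Rightarrow> real \<Rightarrow> real \<Rightarrow> complex" where
  "circle_loop p r t = p + of_real r * cis (2 * pi * t)"

text \<open>A homeomorphism f of the plane is orientation preserving iff it has local degree +1
  at every point: the image under f of every small positively oriented circle around p
  winds once positively around f p, i.e. the loop (f o circle) - f p is homotopic in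
  C - {0} to the standard generator of the fundamental group.\<close>
definition orientation_preserving :: "(complex \<Rightarrow> complex) \<Rightarrow> bool" where
  "orientation_preserving f \<longleftrightarrow>
     (\<forall>p r. r > 0 \<longrightarrow>
        homotopic_loops (- {0}) (\<lambda>t. f (circle_loop p r t) - f p) (circle_loop 0 1))"

definition hmap :: "real \<Rightarrow> real \<Rightarrow> complex \<Rightarrow> complex" where
  "hmap l m z = Complex (l * Re z) (m * Im z)"

end

theory Submission
  imports Defs
begin

text \<open>Write \<open>h = hmap \<lambda> \<mu>\<close>, so that \<open>h \<circ> f = f\<^sup>n \<circ> h\<close>. The supremum \<open>S\<close> of the horizontal
  displacement \<open>\<bar>Re (f p - p)\<bar>\<close> satisfies \<open>\<lambda> S \<le> n S\<close>, since \<open>f\<^sup>n\<close> displaces at most \<open>n S\<close>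
  horizontally while \<open>h\<close> stretches horizontal distances by \<open>\<lambda> > n\<close>; hence \<open>S = 0\<close> and \<open>f\<close> maps
  every vertical line to itself. On each vertical line \<open>f\<close> is a homeomorphism of \<open>\<real>\<close> at bounded
  distance from the identity, hence increasing, so every orbit moves monotonically and
  \<open>f\<^sup>n\<close> displaces each point vertically at least as far as \<open>f\<close> does. Conjugating by \<open>h\<close>, which
  contracts vertical distances by \<open>\<mu> < 1\<close>, gives \<open>T \<le> \<mu> T\<close> for the supremum \<open>T\<close> of the vertical
  displacement, so \<open>T = 0\<close>.\<close>

lemma le_contraction_of_Sup_imp_zero:
  fixes D :: "'a \<Rightarrow> real"
  assumes "bdd_above (range D)" and "\<And>p. 0 \<le> D p" and "c < 1"
    and "\<And>p. D p \<le> c * (SUP p. D p)"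
  shows "D p = 0"
proof -
  define S where "S = (SUP p. D p)"
  have "D p \<le> S" for p
    unfolding S_def using assms(1) by (intro cSup_upper) auto
  moreover have "S \<le> c * S"
    unfolding S_def using assms(4) by (intro cSUP_least) auto
  ultimately have "S = 0"
    using assms(2)[of p] assms(3) by (smt (verit) mult_le_cancel_right1)
  then show ?thesis
    using \<open>D p \<le> S\<close> assms(2)[of p] by simp
qed

lemma abs_Re_funpow_diff_le:
  fixes f :: "complex \<Rightarrow> complex"
  assumes "\<And>p. \<bar>Re (f p - p)\<bar> \<le> S"
  shows "\<bar>Re ((f ^^ m) p - p)\<bar> \<le> real m * S"
proof (induction m)
  case (Suc m)
  have "\<bar>Re ((f ^^ Suc m) p - p)\<bar> \<le> \<bar>Re (f ((f ^^ m) p) - (f ^^ m) p)\<bar> + \<bar>Re ((f ^^ m) p - p)\<bar>"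
    by simp
  also have "\<dots> \<le> S + real m * S"
    using assms Suc.IH by (rule add_mono)
  finally show ?case
    by (simp add: algebra_simps)
qed simp

lemma funpow_le_of_mono_decreasing:
  fixes g :: "'a::ordered_ab_group_add \<Rightarrow> 'a"
  assumes "mono g" and "g x \<le> x" and "n \<ge> 1"
  shows "(g ^^ n) x \<le> g x"
proof -
  define g' where "g' y = - g (- y)" for y
  have "mono g'"
    using assms(1) by (auto simp: g'_def mono_def monoD)
  have g'_funpow: "(g' ^^ k) y = - (g ^^ k) (- y)" for k y
    by (induction k) (simp_all add: g'_def)
  have "(g' ^^ 1) (- x) \<le> (g' ^^ n) (- x)"
    using \<open>mono g'\<close> assms(2,3) by (intro funpow_mono2) (simp_all add: g'_def)
  then show ?thesis
    by (simp add: g'_funpow g'_def)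
qed

lemma mono_displacement_le_funpow:
  fixes g :: "'a::{linordered_ab_group_add, ordered_ab_group_add_abs} \<Rightarrow> 'a"
  assumes "mono g" and "n \<ge> 1"
  shows "\<bar>g x - x\<bar> \<le> \<bar>(g ^^ n) x - x\<bar>"
proof (cases "x \<le> g x")
  case True
  then have "(g ^^ 1) x \<le> (g ^^ n) x"
    using assms by (intro funpow_mono2) auto
  with True show ?thesis
    by simp
next
  case False
  then have "(g ^^ n) x \<le> g x"
    using assms by (intro funpow_le_of_mono_decreasing) auto
  with False show ?thesis
    by simp
qed

lemma strict_mono_if_bounded_displacement:
  fixes \<phi> :: "real \<Rightarrow> real"
  assumes "continuous_on UNIV \<phi>" and "inj \<phi>" and "\<And>y. \<bar>\<phi> y - y\<bar> \<le> K"
  shows "strict_mono \<phi>"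
proof -
  have "strict_mono_on UNIV \<phi> \<or> strict_antimono_on UNIV \<phi>"
    using injective_eq_monotone_map[of UNIV \<phi>] assms(1,2) by auto
  moreover have "\<not> strict_antimono_on UNIV \<phi>"
  proof
    assume "strict_antimono_on UNIV \<phi>"
    define y where "y = \<bar>\<phi> 0\<bar> + \<bar>K\<bar> + 1"
    have "\<phi> y < \<phi> 0"
      using \<open>strict_antimono_on UNIV \<phi>\<close> by (auto simp: y_def monotone_on_def)
    then show False
      using assms(3)[of y] by (simp add: y_def)
  qed
  ultimately show ?thesis
    by auto
qed

lemma Im_displacement_le_funpow:
  fixes f :: "complex \<Rightarrow> complex"
  assumes "continuous_on UNIV f" and "inj f" and Re_f: "\<And>p. Re (f p) = Re p"
    and "\<And>p. norm (f p - p) \<le> K" and "n \<ge> 1"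
  shows "\<bar>Im (f q - q)\<bar> \<le> \<bar>Im ((f ^^ n) q - q)\<bar>"
proof -
  define x where "x = Re q"
  define \<phi> where "\<phi> y = Im (f (Complex x y))" for y
  have f_line: "f (Complex x y) = Complex x (\<phi> y)" for y
    using Re_f[of "Complex x y"] by (simp add: \<phi>_def complex_eq_iff)
  have funpow_line: "(f ^^ k) (Complex x y) = Complex x ((\<phi> ^^ k) y)" for k y
    by (induction k) (simp_all add: f_line)
  have "continuous_on UNIV \<phi>"
    unfolding \<phi>_def by (intro continuous_intros continuous_on_compose2[OF assms(1)]) auto
  moreover have "inj \<phi>"
    using \<open>inj f\<close> by (intro injI) (metis f_line injD complex.inject)
  moreover have "\<bar>\<phi> y - y\<bar> \<le> K" for y
    using assms(4)[of "Complex x y"] abs_Im_le_cmod[of "f (Complex x y) - Complex x y"]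
    by (simp add: f_line)
  ultimately have "mono \<phi>"
    by (intro strict_mono_mono strict_mono_if_bounded_displacement)
  then have "\<bar>\<phi> (Im q) - Im q\<bar> \<le> \<bar>(\<phi> ^^ n) (Im q) - Im q\<bar>"
    using assms(5) by (rule mono_displacement_le_funpow)
  moreover have "q = Complex x (Im q)"
    by (simp add: x_def complex_eq_iff)
  ultimately show ?thesis
    by (metis f_line funpow_line minus_complex.sel(2) complex.sel(2))
qed

lemma Re_fixed_if_expanding_conjugacy:
  fixes f h :: "complex \<Rightarrow> complex"
  assumes "\<And>p. norm (f p - p) \<le> K" and conj: "\<And>p. h (f p) = (f ^^ n) (h p)"
    and Re_h: "\<And>p. Re (h p) = lam * Re p" and "real n < lam"
  shows "Re (f p) = Re p"
proof -
  define D where "D p = \<bar>Re (f p - p)\<bar>" for p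
  define S where "S = (SUP p. D p)"
  have "bdd_above (range D)"
    unfolding D_def by (rule bdd_aboveI2[of _ _ K]) (meson assms(1) abs_Re_le_cmod order_trans)
  then have D_le_S: "D p \<le> S" for p
    unfolding S_def by (intro cSup_upper) auto
  have "lam > 0"
    using \<open>real n < lam\<close> by linarith
  have "D p \<le> real n / lam * S" for p
  proof -
    have "lam * D p = \<bar>Re (h (f p) - h p)\<bar>"
      using \<open>lam > 0\<close> by (simp add: D_def Re_h abs_mult flip: right_diff_distrib)
    also have "\<dots> = \<bar>Re ((f ^^ n) (h p) - h p)\<bar>"
      by (simp add: conj)
    also have "\<dots> \<le> real n * S"
      using D_le_S unfolding D_def by (rule abs_Re_funpow_diff_le)
    finally show ?thesis
      using \<open>lam > 0\<close> by (simp add: field_simps mult.commute)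
  qed
  then have "D p = 0"
    using \<open>bdd_above (range D)\<close> \<open>real n < lam\<close> \<open>lam > 0\<close>
    by (intro le_contraction_of_Sup_imp_zero[where c = "real n / lam"])
       (auto simp: D_def S_def)
  then show ?thesis
    by (simp add: D_def)
qed

lemma Im_fixed_if_contracting_conjugacy:
  fixes f h :: "complex \<Rightarrow> complex"
  assumes "\<And>p. norm (f p - p) \<le> K" and conj: "\<And>p. h (f p) = (f ^^ n) (h p)"
    and Im_h: "\<And>p. Im (h p) = mu * Im p" and "surj h" and "0 \<le> mu" and "mu < 1"
    and iterate_ge: "\<And>q. \<bar>Im (f q - q)\<bar> \<le> \<bar>Im ((f ^^ n) q - q)\<bar>"
  shows "Im (f p) = Im p"
proof -
  define D where "D p = \<bar>Im (f p - p)\<bar>" for p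
  have "bdd_above (range D)"
    unfolding D_def by (rule bdd_aboveI2[of _ _ K]) (meson assms(1) abs_Im_le_cmod order_trans)
  then have D_le_Sup: "D p \<le> (SUP p. D p)" for p
    by (intro cSup_upper) auto
  have "D q \<le> mu * (SUP p. D p)" for q
  proof -
    obtain p where q: "q = h p"
      using \<open>surj h\<close> by (metis surjD)
    have "D q \<le> \<bar>Im ((f ^^ n) (h p) - h p)\<bar>"
      using iterate_ge q by (simp add: D_def)
    also have "\<dots> = mu * D p"
      using \<open>0 \<le> mu\<close> by (simp add: D_def Im_h abs_mult flip: conj right_diff_distrib)
    also have "\<dots> \<le> mu * (SUP p. D p)"
      using D_le_Sup \<open>0 \<le> mu\<close> by (rule mult_left_mono)
    finally show ?thesis .
  qed
  then have "D p = 0"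
    using \<open>bdd_above (range D)\<close> \<open>mu < 1\<close>
    by (intro le_contraction_of_Sup_imp_zero[where c = mu]) (auto simp: D_def)
  then show ?thesis
    by (simp add: D_def)
qed

lemma Re_hmap [simp]: "Re (hmap l m z) = l * Re z"
  and Im_hmap [simp]: "Im (hmap l m z) = m * Im z"
  by (simp_all add: hmap_def)

lemma surj_hmap: "l \<noteq> 0 \<Longrightarrow> m \<noteq> 0 \<Longrightarrow> surj (hmap l m)"
  by (rule surjI[where f = "hmap (1 / l) (1 / m)"]) (simp add: complex_eq_iff)

lemma inj_hmap: "l \<noteq> 0 \<Longrightarrow> m \<noteq> 0 \<Longrightarrow> inj (hmap l m)"
  by (intro injI) (simp add: complex_eq_iff)

theorem lemma3p1:
  fixes f :: "complex \<Rightarrow> complex" and n :: nat and lam mu :: real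
  assumes "n \<ge> 2" and "lam > real n" and "0 < mu" and "mu < 1"
    and "homeomorphism UNIV UNIV f g"
    and "orientation_preserving f"
    and "\<exists>K>0. \<forall>p. norm (f p - p) \<le> K"
    and "hmap lam mu \<circ> f \<circ> inv (hmap lam mu) = f ^^ n"
  shows "f = id"
proof -
  define h where "h = hmap lam mu"
  obtain K where K: "\<And>p. norm (f p - p) \<le> K"
    using assms(7) by blast
  have "lam \<noteq> 0" "mu \<noteq> 0"
    using assms(1-3) by auto
  then have "inj h" and "surj h"
    unfolding h_def by (simp_all add: inj_hmap surj_hmap)
  have conj: "h (f p) = (f ^^ n) (h p)" for p
    using fun_cong[OF assms(8), of "h p"] \<open>inj h\<close> by (simp add: h_def)
  have Re_h: "Re (h p) = lam * Re p" and Im_h: "Im (h p) = mu * Im p" for p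
    by (simp_all add: h_def)
  have Re_f: "Re (f p) = Re p" for p
    using K conj Re_h assms(2) by (rule Re_fixed_if_expanding_conjugacy)
  have "continuous_on UNIV f"
    using assms(5) by (rule homeomorphism_cont1)
  moreover have "inj f"
    using assms(5) by (metis homeomorphism_apply1 injI UNIV_I)
  ultimately have iterate_ge: "\<bar>Im (f q - q)\<bar> \<le> \<bar>Im ((f ^^ n) q - q)\<bar>" for q
    using Re_f K assms(1) by (intro Im_displacement_le_funpow) auto
  have Im_f: "Im (f p) = Im p" for p
    using K conj Im_h \<open>surj h\<close> less_imp_le[OF assms(3)] assms(4) iterate_ge
    by (rule Im_fixed_if_contracting_conjugacy)
  show "f = id"
    using Re_f Im_f by (auto simp: complex_eq_iff)
qed

end
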